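(* Let $A$ be a bounded distributive lattice, $X$ its Priestley space, and $\kappa$ a regular cardinal. Then every existing join of fewer than $\kappa$ elements in $A$ is distributive if and only if for each $\kappa$-clopen upset $U$ of $X$ such that ${\sf cl_2}(U)$ is clopen, we have ${\sf cl_2}(U)={\sf cl}(U)$.
   Context: A join $\bigvee S$ is distributive if $a\wedge\bigvee S=\bigvee\{a\wedge s:s\in S\}$ for all $a$. The Priestley space $X$ of $A$ is the set of prime filters ordered by inclusion, with topology generated by $\{\mathfrak s(a)\setminus\mathfrak s(b)\}$, $\mathfrak s(a)=\{x:a\in x\}$; $\mathfrak s$ is an isomorphism of $A$ onto the lattice of clopen upsets. ${\sf cl}$ is topological closure and ${\sf cl_2}(S)={\uparrow}{\sf cl}(S)$ (closure in the topology of open downsets). A $\kappa$-clopen upset is a union of fewer than $\kappa$ clopen upsets. *)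

theory Defs
  imports "HOL-Analysis.Analysis"
begin

definition prime_filter :: "'a::{distrib_lattice,bounded_lattice} set \<Rightarrow> bool" where
  "prime_filter x \<longleftrightarrow> top \<in> x \<and> bot \<notin> x
     \<and> (\<forall>a b. a \<in> x \<longrightarrow> a \<le> b \<longrightarrow> b \<in> x)
     \<and> (\<forall>a b. a \<in> x \<longrightarrow> b \<in> x \<longrightarrow> inf a b \<in> x)
     \<and> (\<forall>a b. sup a b \<in> x \<longrightarrow> a \<in> x \<or> b \<in> x)"

definition pspace :: "'a::{distrib_lattice,bounded_lattice} set set" where
  "pspace = {x. prime_filter x}"

definition stone_map :: "'a::{distrib_lattice,bounded_lattice} \<Rightarrow> 'a set set" ("\<s>") where
  "\<s> a = {x \<in> pspace. a \<in> x}"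

definition priestley_top :: "'a::{distrib_lattice,bounded_lattice} set topology" where
  "priestley_top = topology_generated_by {\<s> a - \<s> b | a b. True}"

definition is_upset :: "'a::{distrib_lattice,bounded_lattice} set set \<Rightarrow> bool" where
  "is_upset U \<longleftrightarrow> U \<subseteq> pspace \<and> (\<forall>x\<in>U. \<forall>y\<in>pspace. x \<subseteq> y \<longrightarrow> y \<in> U)"

definition clopen_upset :: "'a::{distrib_lattice,bounded_lattice} set set \<Rightarrow> bool" where
  "clopen_upset U \<longleftrightarrow> is_upset U \<and> openin priestley_top U \<and> closedin priestley_top U"

definition kappa_clopen_upset :: "'k rel \<Rightarrow> 'a::{distrib_lattice,bounded_lattice} set set \<Rightarrow> bool" where
  "kappa_clopen_upset \<kappa> U \<longleftrightarrow>
     (\<exists>F. (card_of F, \<kappa>) \<in> ordLess \<and> (\<forall>V\<in>F. clopen_upset V) \<and> U = \<Union>F)"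

definition cl :: "'a::{distrib_lattice,bounded_lattice} set set \<Rightarrow> 'a set set" where
  "cl U = priestley_top closure_of U"

definition cl2 :: "'a::{distrib_lattice,bounded_lattice} set set \<Rightarrow> 'a set set" where
  "cl2 U = {y \<in> pspace. \<exists>x\<in>cl U. x \<subseteq> y}"

definition is_join :: "'a::order set \<Rightarrow> 'a \<Rightarrow> bool" where
  "is_join S j \<longleftrightarrow> (\<forall>s\<in>S. s \<le> j) \<and> (\<forall>u. (\<forall>s\<in>S. s \<le> u) \<longrightarrow> j \<le> u)"

definition distributive_join :: "'a::{distrib_lattice,bounded_lattice} set \<Rightarrow> 'a \<Rightarrow> bool" where
  "distributive_join S j \<longleftrightarrow> (\<forall>a. is_join {inf a s | s. s \<in> S} (inf a j))"

end

theory Submission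
  imports Defs
begin

text \<open>
  The prime filter theorem and Alexander's subbase lemma make the Priestley space compact, and
  compactness shows that the clopen upsets are exactly the sets \<open>\<s> a\<close>. Hence the
  \<open>\<kappa>\<close>-clopen upsets are the unions \<open>\<Union>(\<s> ` S)\<close> with \<open>|S| < \<kappa>\<close>.
  For such a union \<open>U\<close>, a prime filter outside \<open>cl2 U\<close> lies above no point of the compact
  set \<open>cl U\<close> and is therefore separated from it by some \<open>\<s> c\<close>; consequently
  \<open>cl2 U = \<s> j\<close> holds exactly when \<open>j\<close> is the join of \<open>S\<close>. That join is distributive
  exactly when already \<open>cl U = \<s> j\<close>: a point of \<open>\<s> j\<close> outside \<open>cl U\<close> has a basic
  neighbourhood \<open>\<s> b - \<s> c\<close> missing \<open>U\<close>, which witnesses \<open>b \<sqinter> t \<le> c\<close> for all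
  \<open>t \<in> S\<close> but not \<open>b \<sqinter> j \<le> c\<close>.
\<close>

section \<open>Prime filters and the Stone map\<close>

lemma mem_pspace_iff: "x \<in> pspace \<longleftrightarrow> prime_filter x"
  by (simp add: pspace_def)

lemma mem_stone_map_iff: "x \<in> \<s> a \<longleftrightarrow> prime_filter x \<and> a \<in> x"
  by (simp add: stone_map_def mem_pspace_iff)

lemma prime_filter_top: "prime_filter x \<Longrightarrow> top \<in> x"
  by (simp add: prime_filter_def)

lemma prime_filter_bot: "prime_filter x \<Longrightarrow> bot \<notin> x"
  by (simp add: prime_filter_def)

lemma prime_filter_upward: "prime_filter x \<Longrightarrow> a \<in> x \<Longrightarrow> a \<le> b \<Longrightarrow> b \<in> x"
  by (simp add: prime_filter_def)

lemma prime_filter_inf_iff: "prime_filter x \<Longrightarrow> inf a b \<in> x \<longleftrightarrow> a \<in> x \<and> b \<in> x"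
  unfolding prime_filter_def by (metis inf.cobounded1 inf.cobounded2)

lemma prime_filter_sup_iff: "prime_filter x \<Longrightarrow> sup a b \<in> x \<longleftrightarrow> a \<in> x \<or> b \<in> x"
  unfolding prime_filter_def by (metis sup.cobounded1 sup.cobounded2)

lemma stone_map_subset_pspace: "\<s> a \<subseteq> pspace"
  by (auto simp: mem_stone_map_iff mem_pspace_iff)

lemma stone_map_top: "\<s> top = pspace"
  by (auto simp: mem_stone_map_iff mem_pspace_iff prime_filter_top)

lemma stone_map_bot: "\<s> bot = {}"
  by (auto simp: mem_stone_map_iff mem_pspace_iff prime_filter_bot)

lemma stone_map_inf: "\<s> (inf a b) = \<s> a \<inter> \<s> b"
  by (auto simp: mem_stone_map_iff mem_pspace_iff prime_filter_inf_iff)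

lemma stone_map_sup: "\<s> (sup a b) = \<s> a \<union> \<s> b"
  by (auto simp: mem_stone_map_iff mem_pspace_iff prime_filter_sup_iff)

lemma stone_map_mono: "a \<le> b \<Longrightarrow> \<s> a \<subseteq> \<s> b"
  by (auto simp: mem_stone_map_iff mem_pspace_iff intro: prime_filter_upward)

definition lattice_filter :: "'a::bounded_lattice_top set \<Rightarrow> bool" where
  "lattice_filter F \<longleftrightarrow> top \<in> F \<and> (\<forall>a b. a \<in> F \<longrightarrow> a \<le> b \<longrightarrow> b \<in> F)
     \<and> (\<forall>a b. a \<in> F \<longrightarrow> b \<in> F \<longrightarrow> inf a b \<in> F)"

definition lattice_ideal :: "'a::bounded_lattice_bot set \<Rightarrow> bool" where
  "lattice_ideal I \<longleftrightarrow> bot \<in> I \<and> (\<forall>a b. a \<in> I \<longrightarrow> b \<le> a \<longrightarrow> b \<in> I)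
     \<and> (\<forall>a b. a \<in> I \<longrightarrow> b \<in> I \<longrightarrow> sup a b \<in> I)"

lemma lattice_filter_prime_filter: "prime_filter x \<Longrightarrow> lattice_filter x"
  unfolding lattice_filter_def prime_filter_def by blast

lemma lattice_ideal_compl_prime_filter: "prime_filter x \<Longrightarrow> lattice_ideal (- x)"
  unfolding lattice_ideal_def prime_filter_def by blast

lemma lattice_filter_Union_chain:
  assumes "C \<noteq> {}" and "\<And>F. F \<in> C \<Longrightarrow> lattice_filter F"
    and "\<And>F G. F \<in> C \<Longrightarrow> G \<in> C \<Longrightarrow> F \<subseteq> G \<or> G \<subseteq> F"
  shows "lattice_filter (\<Union>C)"
  unfolding lattice_filter_def
proof (intro conjI allI impI)
  show "top \<in> \<Union>C"
    using assms(1,2) by (auto simp: lattice_filter_def)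
  show "b \<in> \<Union>C" if "a \<in> \<Union>C" "a \<le> b" for a b
    using that assms(2) by (auto simp: lattice_filter_def)
  show "inf a b \<in> \<Union>C" if ab: "a \<in> \<Union>C" "b \<in> \<Union>C" for a b
  proof -
    obtain F G where "F \<in> C" "G \<in> C" "a \<in> F" "b \<in> G"
      using ab by blast
    then have "a \<in> F \<union> G" "b \<in> F \<union> G" "F \<union> G \<in> C"
      using assms(3)[of F G] by (auto simp: sup_absorb1 sup_absorb2)
    then show ?thesis
      using assms(2) unfolding lattice_filter_def by blast
  qed
qed

lemma lattice_filter_adjoin:
  fixes F :: "'a::{distrib_lattice,bounded_lattice} set" and c :: 'a
  assumes "lattice_filter F"
  defines "G \<equiv> {z. \<exists>e\<in>F. inf e c \<le> z}"
  shows "lattice_filter G" and "F \<subseteq> G" and "c \<in> G"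
proof -
  show "lattice_filter G"
    unfolding lattice_filter_def
  proof (intro conjI allI impI)
    show "top \<in> G"
      using assms by (auto simp: G_def lattice_filter_def)
    show "b \<in> G" if "a \<in> G" "a \<le> b" for a b
      using that order_trans unfolding G_def by blast
    show "inf a b \<in> G" if ab: "a \<in> G" "b \<in> G" for a b
    proof -
      obtain e1 e2 where "e1 \<in> F" "e2 \<in> F" "inf e1 c \<le> a" "inf e2 c \<le> b"
        using ab by (auto simp: G_def)
      moreover have "inf (inf e1 e2) c \<le> inf a b"
        using calculation by (meson inf.bounded_iff inf.cobounded1 inf.cobounded2 order_trans)
      ultimately show ?thesis
        using assms(1) unfolding G_def lattice_filter_def by blast
    qed
  qed
  show "F \<subseteq> G"
    by (auto simp: G_def intro: inf.coboundedI1)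
  show "c \<in> G"
    using assms(1) by (auto simp: G_def lattice_filter_def)
qed

lemma maximal_filter_prime:
  fixes M I :: "'a::{distrib_lattice,bounded_lattice} set"
  assumes M: "lattice_filter M" and I: "lattice_ideal I" and disj: "M \<inter> I = {}"
    and max: "\<And>G. lattice_filter G \<Longrightarrow> M \<subseteq> G \<Longrightarrow> G \<inter> I = {} \<Longrightarrow> G = M"
  shows "prime_filter M"
proof -
  have meets_ideal: "\<exists>e\<in>M. inf e c \<in> I" if "c \<notin> M" for c
  proof (rule ccontr)
    assume none: "\<not> (\<exists>e\<in>M. inf e c \<in> I)"
    define G where "G = {z. \<exists>e\<in>M. inf e c \<le> z}"
    have "G \<inter> I = {}"
      using none I unfolding G_def lattice_ideal_def by blast
    then have "G = M"
      using max lattice_filter_adjoin[OF M] unfolding G_def by blast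
    then show False
      using lattice_filter_adjoin(3)[OF M] that unfolding G_def by blast
  qed
  show ?thesis
    unfolding prime_filter_def
  proof (intro conjI allI impI)
    show "top \<in> M" "\<And>a b. a \<in> M \<Longrightarrow> a \<le> b \<Longrightarrow> b \<in> M"
      "\<And>a b. a \<in> M \<Longrightarrow> b \<in> M \<Longrightarrow> inf a b \<in> M"
      using M by (simp_all add: lattice_filter_def)
    show "bot \<notin> M"
      using I disj by (auto simp: lattice_ideal_def)
    show "c \<in> M \<or> d \<in> M" if cd: "sup c d \<in> M" for c d
    proof (rule ccontr)
      assume "\<not> (c \<in> M \<or> d \<in> M)"
      then obtain e f where ef: "e \<in> M" "inf e c \<in> I" "f \<in> M" "inf f d \<in> I"
        using meets_ideal by blast
      have "inf (inf e f) (sup c d) \<in> M"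
        using M ef cd unfolding lattice_filter_def by blast
      moreover have "inf (inf e f) (sup c d) \<le> sup (inf e c) (inf f d)"
        by (simp add: inf_sup_distrib1 le_infI1 le_infI2 sup.coboundedI1 sup.coboundedI2 sup_mono)
      moreover have "sup (inf e c) (inf f d) \<in> I"
        using I ef unfolding lattice_ideal_def by blast
      ultimately show False
        using I disj unfolding lattice_ideal_def by blast
    qed
  qed
qed

theorem prime_filter_theorem:
  fixes F I :: "'a::{distrib_lattice,bounded_lattice} set"
  assumes F: "lattice_filter F" and I: "lattice_ideal I" and disj: "F \<inter> I = {}"
  shows "\<exists>x. prime_filter x \<and> F \<subseteq> x \<and> x \<inter> I = {}"
proof -
  define \<A> where "\<A> = {G. lattice_filter G \<and> F \<subseteq> G \<and> G \<inter> I = {}}"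
  have "\<exists>M\<in>\<A>. \<forall>G\<in>\<A>. M \<subseteq> G \<longrightarrow> G = M"
  proof (rule subset_Zorn_nonempty)
    show "\<A> \<noteq> {}"
      using assms by (auto simp: \<A>_def)
    show "\<Union>\<C> \<in> \<A>" if "\<C> \<noteq> {}" "subset.chain \<A> \<C>" for \<C>
      using that lattice_filter_Union_chain[of \<C>]
      unfolding \<A>_def subset.chain_def by blast
  qed
  then obtain M where "M \<in> \<A>" and "\<forall>G\<in>\<A>. M \<subseteq> G \<longrightarrow> G = M"
    by blast
  then have "prime_filter M"
    by (intro maximal_filter_prime[OF _ I]) (auto simp: \<A>_def)
  with \<open>M \<in> \<A>\<close> show ?thesis
    by (auto simp: \<A>_def)
qed

lemma stone_map_subset_iff: "\<s> a \<subseteq> \<s> b \<longleftrightarrow> a \<le> b"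
proof
  assume sub: "\<s> a \<subseteq> \<s> b"
  show "a \<le> b"
  proof (rule ccontr)
    assume "\<not> a \<le> b"
    then have "{z. a \<le> z} \<inter> {z. z \<le> b} = {}"
      using order_trans by blast
    moreover have "lattice_filter {z. a \<le> z}" "lattice_ideal {z. z \<le> b}"
      by (auto simp: lattice_filter_def lattice_ideal_def intro: order_trans)
    ultimately obtain x where "prime_filter x" "a \<in> x" "b \<notin> x"
      using prime_filter_theorem[of "{z. a \<le> z}" "{z. z \<le> b}"] by blast
    then show False
      using sub by (auto simp: mem_stone_map_iff mem_pspace_iff)
  qed
qed (rule stone_map_mono)

section \<open>Compactness of the Priestley space\<close>

lemma compactin_directed_cover:
  assumes K: "compactin X K" and cover: "K \<subseteq> \<Union>\<U>" and "\<And>U. U \<in> \<U> \<Longrightarrow> openin X U"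
    and "\<U> \<noteq> {}" and directed: "\<And>U V. U \<in> \<U> \<Longrightarrow> V \<in> \<U> \<Longrightarrow> \<exists>W\<in>\<U>. U \<union> V \<subseteq> W"
  shows "\<exists>U\<in>\<U>. K \<subseteq> U"
proof -
  have "(\<forall>U\<in>\<U>. openin X U) \<and> K \<subseteq> \<Union>\<U>"
    using assms(3) cover by blast
  then obtain \<F> where \<F>: "finite \<F>" "\<F> \<subseteq> \<U>" "K \<subseteq> \<Union>\<F>"
    using K unfolding compactin_def by (elim conjE allE[of _ \<U>] impE exE) auto
  have "\<exists>U\<in>\<U>. \<Union>\<F>' \<subseteq> U" if "finite \<F>'" "\<F>' \<subseteq> \<U>" for \<F>'
    using that
  proof (induction rule: finite_induct)
    case empty
    then show ?case
      using \<open>\<U> \<noteq> {}\<close> by auto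
  next
    case (insert V \<F>')
    then obtain U where "U \<in> \<U>" "\<Union>\<F>' \<subseteq> U"
      by auto
    moreover obtain W where "W \<in> \<U>" "V \<union> U \<subseteq> W"
      using directed[of V U] insert.prems \<open>U \<in> \<U>\<close> by auto
    ultimately show ?case
      by auto
  qed
  from this[OF \<F>(1,2)] obtain U where "U \<in> \<U>" "\<Union>\<F> \<subseteq> U" ..
  from \<F>(3) this(2) have "K \<subseteq> U"
    by (rule subset_trans)
  from this \<open>U \<in> \<U>\<close> show ?thesis ..
qed

lemma topspace_priestley_top: "topspace priestley_top = pspace"
proof -
  have "\<Union>{\<s> a - \<s> b | a b. True} = pspace"
    using stone_map_subset_pspace stone_map_top stone_map_bot by fastforce
  then show ?thesis
    by (simp add: priestley_top_def)
qed

lemma openin_stone_map_diff: "openin priestley_top (\<s> a - \<s> b)"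
  unfolding priestley_top_def by (rule topology_generated_by_Basis) blast

lemma openin_stone_map: "openin priestley_top (\<s> a)"
  using openin_stone_map_diff[of a bot] by (simp add: stone_map_bot)

lemma openin_pspace_diff_stone_map: "openin priestley_top (pspace - \<s> a)"
  using openin_stone_map_diff[of top a] by (simp add: stone_map_top)

lemma closedin_stone_map: "closedin priestley_top (\<s> a)"
  unfolding closedin_def topspace_priestley_top
  using openin_pspace_diff_stone_map stone_map_subset_pspace by blast

lemma openin_priestley_top_basis:
  assumes "openin priestley_top W" and "x \<in> W"
  shows "\<exists>b c. x \<in> \<s> b - \<s> c \<and> \<s> b - \<s> c \<subseteq> W"
proof -
  have "generate_topology_on {\<s> a - \<s> b | a b. True} W"
    using assms(1) unfolding priestley_top_def openin_topology_generated_by_iff .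
  then show ?thesis
    using assms(2)
  proof (induction arbitrary: x)
    case (Int U V)
    then obtain b1 c1 b2 c2 where "x \<in> \<s> b1 - \<s> c1" "\<s> b1 - \<s> c1 \<subseteq> U"
      "x \<in> \<s> b2 - \<s> c2" "\<s> b2 - \<s> c2 \<subseteq> V"
      by (metis IntE)
    then show ?case
      by (intro exI[of _ "inf b1 b2"] exI[of _ "sup c1 c2"]) (auto simp: stone_map_inf stone_map_sup)
  qed blast+
qed

definition priestley_subbase :: "'a::{distrib_lattice,bounded_lattice} set set set" where
  "priestley_subbase = range \<s> \<union> range (\<lambda>b. pspace - \<s> b)"

lemma Union_priestley_subbase: "\<Union>priestley_subbase = pspace"
  unfolding priestley_subbase_def using stone_map_subset_pspace stone_map_top by blast

lemma priestley_top_subbase: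
  "topology (arbitrary union_of
      (finite intersection_of (\<lambda>V. V \<in> priestley_subbase) relative_to \<Union>priestley_subbase))
    = (priestley_top :: 'a::{distrib_lattice,bounded_lattice} set topology)"
proof (rule topology_base_unique)
  fix S :: "'a set set"
  assume "(finite intersection_of (\<lambda>V. V \<in> priestley_subbase) relative_to \<Union>priestley_subbase) S"
  then have S: "openin (topology (arbitrary union_of
      (finite intersection_of (\<lambda>V. V \<in> priestley_subbase) relative_to \<Union>priestley_subbase))) S"
    by (simp add: openin_subbase arbitrary_union_of_inc)
  have subbase: "openin priestley_top V" if "V \<in> priestley_subbase" for V :: "'a set set"
    using that openin_stone_map openin_pspace_diff_stone_map by (auto simp: priestley_subbase_def)
  have Union: "openin priestley_top (\<Union>priestley_subbase)"
    by (simp add: Union_priestley_subbase flip: topspace_priestley_top)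
  show "openin priestley_top S"
    by (rule minimal_topology_subbase[OF subbase Union S])
next
  fix W :: "'a set set" and x
  assume "openin priestley_top W" "x \<in> W"
  then obtain b c where bc: "x \<in> \<s> b - \<s> c" "\<s> b - \<s> c \<subseteq> W"
    using openin_priestley_top_basis by blast
  have "(finite intersection_of (\<lambda>V. V \<in> priestley_subbase)) (\<s> b \<inter> (pspace - \<s> c))"
    by (intro finite_intersection_of_Int finite_intersection_of_inc) (auto simp: priestley_subbase_def)
  moreover have "\<Union>priestley_subbase \<inter> (\<s> b \<inter> (pspace - \<s> c)) = \<s> b - \<s> c"
    using stone_map_subset_pspace by (auto simp: Union_priestley_subbase)
  ultimately have "(finite intersection_of (\<lambda>V. V \<in> priestley_subbase)
      relative_to \<Union>priestley_subbase) (\<s> b - \<s> c)"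
    unfolding relative_to_def by (intro exI[of _ "\<s> b \<inter> (pspace - \<s> c)"]) simp
  then show "\<exists>B. (finite intersection_of (\<lambda>V. V \<in> priestley_subbase)
      relative_to \<Union>priestley_subbase) B \<and> x \<in> B \<and> B \<subseteq> W"
    using bc by blast
qed

inductive_set filter_generated :: "'a::bounded_lattice_top set \<Rightarrow> 'a set" for J where
  top: "top \<in> filter_generated J"
| generator: "b \<in> J \<Longrightarrow> b \<in> filter_generated J"
| inf: "a \<in> filter_generated J \<Longrightarrow> b \<in> filter_generated J \<Longrightarrow> inf a b \<in> filter_generated J"
| upward: "a \<in> filter_generated J \<Longrightarrow> a \<le> b \<Longrightarrow> b \<in> filter_generated J"

inductive_set ideal_generated :: "'a::bounded_lattice_bot set \<Rightarrow> 'a set" for J where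
  bot: "bot \<in> ideal_generated J"
| generator: "b \<in> J \<Longrightarrow> b \<in> ideal_generated J"
| sup: "a \<in> ideal_generated J \<Longrightarrow> b \<in> ideal_generated J \<Longrightarrow> sup a b \<in> ideal_generated J"
| downward: "a \<in> ideal_generated J \<Longrightarrow> b \<le> a \<Longrightarrow> b \<in> ideal_generated J"

lemma lattice_filter_filter_generated: "lattice_filter (filter_generated J)"
  by (auto simp: lattice_filter_def intro: filter_generated.intros)

lemma lattice_ideal_ideal_generated: "lattice_ideal (ideal_generated J)"
  by (auto simp: lattice_ideal_def intro: ideal_generated.intros)

lemma filter_generated_least:
  assumes "lattice_filter F" and "J \<subseteq> F"
  shows "filter_generated J \<subseteq> F"
proof
  show "z \<in> F" if "z \<in> filter_generated J" for z
    using that by induction (use assms in \<open>auto simp: lattice_filter_def\<close>)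
qed

lemma ideal_generated_least:
  assumes "lattice_ideal I" and "J \<subseteq> I"
  shows "ideal_generated J \<subseteq> I"
proof
  show "z \<in> I" if "z \<in> ideal_generated J" for z
    using that by induction (use assms in \<open>auto simp: lattice_ideal_def\<close>)
qed

lemma filter_generated_mono: "J \<subseteq> K \<Longrightarrow> filter_generated J \<subseteq> filter_generated K"
  by (meson filter_generated.generator filter_generated_least lattice_filter_filter_generated subsetI subset_trans)

lemma ideal_generated_mono: "J \<subseteq> K \<Longrightarrow> ideal_generated J \<subseteq> ideal_generated K"
  by (meson ideal_generated.generator ideal_generated_least lattice_ideal_ideal_generated subsetI subset_trans)

lemma filter_generated_finite:
  "z \<in> filter_generated J \<Longrightarrow> \<exists>J0. finite J0 \<and> J0 \<subseteq> J \<and> z \<in> filter_generated J0"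
proof (induction rule: filter_generated.induct)
  case (inf a b)
  then obtain A B where "finite A" "A \<subseteq> J" "a \<in> filter_generated A"
    "finite B" "B \<subseteq> J" "b \<in> filter_generated B"
    by blast
  then show ?case
    using filter_generated_mono[of A "A \<union> B"] filter_generated_mono[of B "A \<union> B"]
    by (intro exI[of _ "A \<union> B"]) (auto intro: filter_generated.inf)
next
  case top
  show ?case
    by (intro exI[of _ "{}"]) (simp add: filter_generated.top)
next
  case (generator b)
  then show ?case
    by (intro exI[of _ "{b}"]) (simp add: filter_generated.generator)
next
  case (upward a b)
  then show ?case
    by (blast intro: filter_generated.upward)
qed

lemma ideal_generated_finite:
  "z \<in> ideal_generated J \<Longrightarrow> \<exists>J0. finite J0 \<and> J0 \<subseteq> J \<and> z \<in> ideal_generated J0"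
proof (induction rule: ideal_generated.induct)
  case (sup a b)
  then obtain A B where "finite A" "A \<subseteq> J" "a \<in> ideal_generated A"
    "finite B" "B \<subseteq> J" "b \<in> ideal_generated B"
    by blast
  then show ?case
    using ideal_generated_mono[of A "A \<union> B"] ideal_generated_mono[of B "A \<union> B"]
    by (intro exI[of _ "A \<union> B"]) (auto intro: ideal_generated.sup)
next
  case bot
  show ?case
    by (intro exI[of _ "{}"]) (simp add: ideal_generated.bot)
next
  case (generator b)
  then show ?case
    by (intro exI[of _ "{b}"]) (simp add: ideal_generated.generator)
next
  case (downward a b)
  then show ?case
    by (blast intro: ideal_generated.downward)
qed

lemma prime_filter_meets_or_omits:
  assumes "z \<in> filter_generated J" and "z \<in> ideal_generated I" and x: "prime_filter x"
  shows "(\<exists>i\<in>I. i \<in> x) \<or> (\<exists>j\<in>J. j \<notin> x)"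
proof (rule disjCI)
  assume "\<not> (\<exists>j\<in>J. j \<notin> x)"
  then have "z \<in> x"
    using filter_generated_least[OF lattice_filter_prime_filter[OF x]] assms(1) by blast
  then have "\<not> I \<subseteq> - x"
    using ideal_generated_least[OF lattice_ideal_compl_prime_filter[OF x]] assms(2) by blast
  then show "\<exists>i\<in>I. i \<in> x"
    by blast
qed

lemma priestley_subbase_cover_filter_meets_ideal:
  assumes C: "C \<subseteq> priestley_subbase" and cover: "\<Union>C = pspace"
  shows "filter_generated {b. pspace - \<s> b \<in> C} \<inter> ideal_generated {a. \<s> a \<in> C} \<noteq> {}"
proof
  assume "filter_generated {b. pspace - \<s> b \<in> C} \<inter> ideal_generated {a. \<s> a \<in> C} = {}"
  then obtain x where x: "prime_filter x" "filter_generated {b. pspace - \<s> b \<in> C} \<subseteq> x"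
    "x \<inter> ideal_generated {a. \<s> a \<in> C} = {}"
    using prime_filter_theorem[OF lattice_filter_filter_generated lattice_ideal_ideal_generated]
    by blast
  then have "x \<in> \<Union>C"
    using cover by (simp add: mem_pspace_iff)
  then obtain T where "T \<in> C" "x \<in> T"
    by blast
  with C consider a where "T = \<s> a" "\<s> a \<in> C" | b where "T = pspace - \<s> b" "pspace - \<s> b \<in> C"
    by (auto simp: priestley_subbase_def)
  then show False
  proof cases
    case (1 a)
    then show False
      using x(3) \<open>x \<in> T\<close> ideal_generated.generator[of a "{a. \<s> a \<in> C}"]
      by (auto simp: mem_stone_map_iff)
  next
    case (2 b)
    then show False
      using x(1,2) \<open>x \<in> T\<close> filter_generated.generator[of b "{b. pspace - \<s> b \<in> C}"]
      by (auto simp: mem_stone_map_iff mem_pspace_iff)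
  qed
qed

lemma priestley_subbase_finite_subcover:
  fixes C :: "'a::{distrib_lattice,bounded_lattice} set set set"
  assumes C: "C \<subseteq> priestley_subbase" and cover: "\<Union>C = pspace"
  shows "\<exists>C'. finite C' \<and> C' \<subseteq> C \<and> \<Union>C' = pspace"
proof -
  obtain z where "z \<in> filter_generated {b. pspace - \<s> b \<in> C}" "z \<in> ideal_generated {a. \<s> a \<in> C}"
    using priestley_subbase_cover_filter_meets_ideal[OF C cover] by blast
  then obtain J I where J: "finite J" "J \<subseteq> {b. pspace - \<s> b \<in> C}" "z \<in> filter_generated J"
    and I: "finite I" "I \<subseteq> {a. \<s> a \<in> C}" "z \<in> ideal_generated I"
    using filter_generated_finite ideal_generated_finite by meson
  define C' where "C' = \<s> ` I \<union> (\<lambda>b. pspace - \<s> b) ` J"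
  have "x \<in> \<Union>C'" if "x \<in> pspace" for x
    using prime_filter_meets_or_omits[OF J(3) I(3)] that
    by (auto simp: C'_def mem_stone_map_iff mem_pspace_iff)
  moreover have "\<Union>C' \<subseteq> pspace"
    using stone_map_subset_pspace by (auto simp: C'_def)
  moreover have "finite C'" "C' \<subseteq> C"
    using J I by (auto simp: C'_def)
  ultimately show ?thesis
    by blast
qed

lemma compact_space_priestley_top:
  "compact_space (priestley_top :: 'a::{distrib_lattice,bounded_lattice} set topology)"
proof (rule Alexander_subbase[OF priestley_top_subbase])
  fix C :: "'a set set set"
  assume "C \<subseteq> priestley_subbase" and "\<Union>C = topspace priestley_top"
  then show "\<exists>C'. finite C' \<and> C' \<subseteq> C \<and> \<Union>C' = topspace priestley_top"
    unfolding topspace_priestley_top by (rule priestley_subbase_finite_subcover)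
qed

section \<open>Clopen upsets\<close>

lemma closedin_subset_stone_map_avoiding:
  assumes K: "closedin priestley_top K" and y: "prime_filter y"
    and not_below: "\<And>x. x \<in> K \<Longrightarrow> \<not> x \<subseteq> y"
  shows "\<exists>c. c \<notin> y \<and> K \<subseteq> \<s> c"
proof -
  have "\<exists>U\<in>\<s> ` (- y). K \<subseteq> U"
  proof (rule compactin_directed_cover)
    show "compactin priestley_top K"
      using K closedin_compact_space compact_space_priestley_top by blast
    show "K \<subseteq> \<Union>(\<s> ` (- y))"
    proof
      fix x
      assume "x \<in> K"
      then have "prime_filter x"
        using K closedin_subset by (fastforce simp: topspace_priestley_top mem_pspace_iff)
      moreover obtain c where "c \<in> x" "c \<notin> y"
        using not_below \<open>x \<in> K\<close> by blast
      ultimately show "x \<in> \<Union>(\<s> ` (- y))"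
        by (auto simp: mem_stone_map_iff)
    qed
    show "openin priestley_top U" if "U \<in> \<s> ` (- y)" for U
      using that openin_stone_map by blast
    show "\<s> ` (- y) \<noteq> {}"
      using prime_filter_bot[OF y] by blast
    show "\<exists>W\<in>\<s> ` (- y). U \<union> V \<subseteq> W" if UV: "U \<in> \<s> ` (- y)" "V \<in> \<s> ` (- y)" for U V
    proof -
      obtain c d where "c \<notin> y" "d \<notin> y" "U = \<s> c" "V = \<s> d"
        using UV by blast
      moreover have "sup c d \<notin> y"
        using \<open>c \<notin> y\<close> \<open>d \<notin> y\<close> prime_filter_sup_iff[OF y] by blast
      ultimately show ?thesis
        by (metis ComplI imageI order_refl stone_map_sup)
    qed
  qed
  then show ?thesis
    by blast
qed

lemma closedin_upset_separation:
  assumes "closedin priestley_top V" and "is_upset V" and y: "y \<in> pspace - V"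
  shows "\<exists>c. y \<notin> \<s> c \<and> V \<subseteq> \<s> c"
proof -
  have "\<not> x \<subseteq> y" if "x \<in> V" for x
    using assms(2) y that unfolding is_upset_def by blast
  then show ?thesis
    using closedin_subset_stone_map_avoiding[OF assms(1)] y by (auto simp: mem_stone_map_iff mem_pspace_iff)
qed

lemma stone_map_clopen_upset: "clopen_upset (\<s> a)"
  unfolding clopen_upset_def is_upset_def
  using stone_map_subset_pspace openin_stone_map closedin_stone_map
  by (auto simp: mem_stone_map_iff mem_pspace_iff intro: prime_filter_upward)

lemma clopen_upset_iff: "clopen_upset V \<longleftrightarrow> (\<exists>a. V = \<s> a)"
proof
  assume "clopen_upset V"
  then have up: "is_upset V" and op: "openin priestley_top V" and cl: "closedin priestley_top V"
    by (auto simp: clopen_upset_def)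
  have V: "V \<subseteq> pspace"
    using up by (simp add: is_upset_def)
  have "\<exists>U\<in>(\<lambda>c. pspace - \<s> c) ` {c. V \<subseteq> \<s> c}. pspace - V \<subseteq> U"
  proof (rule compactin_directed_cover)
    show "compactin priestley_top (pspace - V)"
      using closedin_diff[OF closedin_topspace op] closedin_compact_space compact_space_priestley_top
      by (simp add: topspace_priestley_top)
    show "pspace - V \<subseteq> \<Union>((\<lambda>c. pspace - \<s> c) ` {c. V \<subseteq> \<s> c})"
      using closedin_upset_separation[OF cl up] by blast
    show "openin priestley_top U" if "U \<in> (\<lambda>c. pspace - \<s> c) ` {c. V \<subseteq> \<s> c}" for U
      using that openin_pspace_diff_stone_map by blast
    show "(\<lambda>c. pspace - \<s> c) ` {c. V \<subseteq> \<s> c} \<noteq> {}"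
      using V stone_map_top by blast
    show "\<exists>W\<in>(\<lambda>c. pspace - \<s> c) ` {c. V \<subseteq> \<s> c}. U \<union> W' \<subseteq> W"
      if UW: "U \<in> (\<lambda>c. pspace - \<s> c) ` {c. V \<subseteq> \<s> c}" "W' \<in> (\<lambda>c. pspace - \<s> c) ` {c. V \<subseteq> \<s> c}"
      for U W'
    proof -
      obtain c d where "V \<subseteq> \<s> c" "V \<subseteq> \<s> d" "U = pspace - \<s> c" "W' = pspace - \<s> d"
        using UW by blast
      then have "V \<subseteq> \<s> (inf c d)" "U \<union> W' \<subseteq> pspace - \<s> (inf c d)"
        by (auto simp: stone_map_inf)
      then show ?thesis
        by blast
    qed
  qed
  then obtain d where "V \<subseteq> \<s> d" "pspace - V \<subseteq> pspace - \<s> d"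
    by blast
  then have "V = \<s> d"
    using V stone_map_subset_pspace[of d] by blast
  then show "\<exists>a. V = \<s> a" ..
qed (metis stone_map_clopen_upset)

section \<open>Closures of unions of clopen upsets\<close>

lemma cl_subset_pspace: "cl U \<subseteq> pspace"
  unfolding cl_def using closure_of_subset_topspace[of priestley_top U]
  by (simp add: topspace_priestley_top)

lemma subset_cl: "U \<subseteq> pspace \<Longrightarrow> U \<subseteq> cl U"
  unfolding cl_def by (rule closure_of_subset) (simp add: topspace_priestley_top)

lemma closedin_cl: "closedin priestley_top (cl U)"
  by (simp add: cl_def)

lemma cl_subset_cl2: "cl U \<subseteq> cl2 U"
  unfolding cl2_def using cl_subset_pspace by blast

lemma is_upset_cl2: "is_upset (cl2 U)"
  unfolding is_upset_def cl2_def by (auto intro: order_trans)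

lemma cl_subset_stone_map: "U \<subseteq> \<s> a \<Longrightarrow> cl U \<subseteq> \<s> a"
  unfolding cl_def by (rule closure_of_minimal) (simp_all add: closedin_stone_map)

lemma cl2_subset_stone_map:
  assumes "U \<subseteq> \<s> a"
  shows "cl2 U \<subseteq> \<s> a"
proof
  fix y
  assume "y \<in> cl2 U"
  then obtain x where "x \<in> cl U" "x \<subseteq> y" "prime_filter y"
    by (auto simp: cl2_def mem_pspace_iff)
  moreover have "a \<in> x"
    using cl_subset_stone_map[OF assms] \<open>x \<in> cl U\<close> by (auto simp: mem_stone_map_iff)
  ultimately show "y \<in> \<s> a"
    by (auto simp: mem_stone_map_iff)
qed

lemma Union_stone_map_subset_pspace: "\<Union>(\<s> ` S) \<subseteq> pspace"
  using stone_map_subset_pspace by blast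

lemma Union_stone_map_subset_iff: "\<Union>(\<s> ` S) \<subseteq> \<s> c \<longleftrightarrow> (\<forall>t\<in>S. t \<le> c)"
  by (simp add: UN_subset_iff stone_map_subset_iff)

lemma stone_map_join_subset_cl2:
  assumes J: "is_join S j"
  shows "\<s> j \<subseteq> cl2 (\<Union>(\<s> ` S))"
proof
  fix y
  assume "y \<in> \<s> j"
  then have y: "prime_filter y" "j \<in> y"
    by (simp_all add: mem_stone_map_iff)
  show "y \<in> cl2 (\<Union>(\<s> ` S))"
  proof (rule ccontr)
    assume "y \<notin> cl2 (\<Union>(\<s> ` S))"
    then have "\<not> x \<subseteq> y" if "x \<in> cl (\<Union>(\<s> ` S))" for x
      using that y(1) by (auto simp: cl2_def mem_pspace_iff)
    then obtain c where c: "c \<notin> y" "cl (\<Union>(\<s> ` S)) \<subseteq> \<s> c"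
      using closedin_subset_stone_map_avoiding[OF closedin_cl y(1)] by blast
    then have "\<Union>(\<s> ` S) \<subseteq> \<s> c"
      using subset_cl[OF Union_stone_map_subset_pspace] by blast
    then have "\<forall>t\<in>S. t \<le> c"
      by (simp add: Union_stone_map_subset_iff)
    then have "j \<le> c"
      using J unfolding is_join_def by blast
    then show False
      using y c(1) prime_filter_upward by blast
  qed
qed

lemma cl2_Union_stone_map_eq_iff: "cl2 (\<Union>(\<s> ` S)) = \<s> j \<longleftrightarrow> is_join S j"
proof
  assume eq: "cl2 (\<Union>(\<s> ` S)) = \<s> j"
  show "is_join S j"
    unfolding is_join_def
  proof (intro conjI allI impI ballI)
    fix t
    assume "t \<in> S"
    then have "\<s> t \<subseteq> cl (\<Union>(\<s> ` S))"
      using subset_cl[OF Union_stone_map_subset_pspace] by blast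
    then have "\<s> t \<subseteq> cl2 (\<Union>(\<s> ` S))"
      using cl_subset_cl2 by (rule subset_trans)
    then show "t \<le> j"
      by (simp add: eq stone_map_subset_iff)
  next
    fix u
    assume "\<forall>t\<in>S. t \<le> u"
    then have "cl2 (\<Union>(\<s> ` S)) \<subseteq> \<s> u"
      by (simp add: cl2_subset_stone_map Union_stone_map_subset_iff)
    then show "j \<le> u"
      by (simp add: eq stone_map_subset_iff)
  qed
next
  assume J: "is_join S j"
  then have "\<Union>(\<s> ` S) \<subseteq> \<s> j"
    by (simp add: is_join_def Union_stone_map_subset_iff)
  then have "cl2 (\<Union>(\<s> ` S)) \<subseteq> \<s> j"
    by (rule cl2_subset_stone_map)
  with stone_map_join_subset_cl2[OF J] show "cl2 (\<Union>(\<s> ` S)) = \<s> j"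
    by (rule subset_antisym[rotated])
qed

lemma stone_map_join_subset_cl_if_distributive:
  assumes D: "distributive_join S j"
  shows "\<s> j \<subseteq> cl (\<Union>(\<s> ` S))"
proof
  fix y
  assume y: "y \<in> \<s> j"
  show "y \<in> cl (\<Union>(\<s> ` S))"
  proof (rule ccontr)
    assume "y \<notin> cl (\<Union>(\<s> ` S))"
    moreover have "y \<in> topspace priestley_top"
      using y by (simp add: topspace_priestley_top mem_stone_map_iff mem_pspace_iff)
    ultimately obtain T where T: "openin priestley_top T" "y \<in> T" "\<forall>z\<in>\<Union>(\<s> ` S). z \<notin> T"
      unfolding cl_def in_closure_of by blast
    then obtain b c where bc: "y \<in> \<s> b - \<s> c" "\<s> b - \<s> c \<subseteq> T"
      using openin_priestley_top_basis by blast
    have "inf b t \<le> c" if "t \<in> S" for t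
    proof -
      have "\<s> b \<inter> \<s> t \<subseteq> \<s> c"
        using T(3) bc(2) that by blast
      then show ?thesis
        by (metis stone_map_inf stone_map_subset_iff)
    qed
    then have "inf b j \<le> c"
      using D unfolding distributive_join_def is_join_def by blast
    then have "\<s> b \<inter> \<s> j \<subseteq> \<s> c"
      by (metis stone_map_inf stone_map_mono)
    then show False
      using bc(1) y by blast
  qed
qed

lemma distributive_join_if_stone_map_subset_cl:
  assumes J: "is_join S j" and cl: "\<s> j \<subseteq> cl (\<Union>(\<s> ` S))"
  shows "distributive_join S j"
  unfolding distributive_join_def is_join_def
proof (intro allI conjI impI ballI)
  fix a z
  assume "z \<in> {inf a t |t. t \<in> S}"
  then show "z \<le> inf a j"
    using J unfolding is_join_def by (auto intro: le_infI2)
next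
  fix a u
  assume ub: "\<forall>z\<in>{inf a t |t. t \<in> S}. z \<le> u"
  have "x \<in> \<s> u" if x: "x \<in> \<s> a" "x \<in> \<s> j" for x
  proof (rule ccontr)
    assume "x \<notin> \<s> u"
    have "x \<in> cl (\<Union>(\<s> ` S))"
      by (rule subsetD[OF cl x(2)])
    then have "\<forall>T. x \<in> T \<and> openin priestley_top T \<longrightarrow> (\<exists>z. z \<in> \<Union>(\<s> ` S) \<and> z \<in> T)"
      unfolding cl_def in_closure_of by (rule conjunct2)
    then obtain z where z: "z \<in> \<Union>(\<s> ` S)" "z \<in> \<s> a - \<s> u"
      using x(1) \<open>x \<notin> \<s> u\<close> openin_stone_map_diff[of a u] by blast
    then obtain t where "t \<in> S" "z \<in> \<s> t"
      by blast
    have "inf a t \<le> u"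
      using ub \<open>t \<in> S\<close> by blast
    then have "\<s> a \<inter> \<s> t \<subseteq> \<s> u"
      by (metis stone_map_inf stone_map_mono)
    then show False
      using z \<open>z \<in> \<s> t\<close> by blast
  qed
  then have "\<s> (inf a j) \<subseteq> \<s> u"
    by (auto simp: stone_map_inf)
  then show "inf a j \<le> u"
    by (simp add: stone_map_subset_iff)
qed

lemma distributive_join_iff_cl:
  assumes J: "is_join S j"
  shows "distributive_join S j \<longleftrightarrow> \<s> j = cl (\<Union>(\<s> ` S))"
proof -
  have "\<Union>(\<s> ` S) \<subseteq> \<s> j"
    using J by (simp add: is_join_def Union_stone_map_subset_iff)
  then have cl: "cl (\<Union>(\<s> ` S)) \<subseteq> \<s> j"
    by (rule cl_subset_stone_map)
  show ?thesis
  proof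
    assume "distributive_join S j"
    then have "\<s> j \<subseteq> cl (\<Union>(\<s> ` S))"
      by (rule stone_map_join_subset_cl_if_distributive)
    with cl show "\<s> j = cl (\<Union>(\<s> ` S))"
      by (rule subset_antisym[rotated])
  next
    assume "\<s> j = cl (\<Union>(\<s> ` S))"
    then show "distributive_join S j"
      by (intro distributive_join_if_stone_map_subset_cl[OF J]) simp
  qed
qed

lemma distributive_join_iff_cl2_eq_cl:
  assumes "is_join S j"
  shows "distributive_join S j \<longleftrightarrow> cl2 (\<Union>(\<s> ` S)) = cl (\<Union>(\<s> ` S))"
proof -
  have "cl2 (\<Union>(\<s> ` S)) = \<s> j"
    using assms by (simp add: cl2_Union_stone_map_eq_iff)
  then show ?thesis
    using distributive_join_iff_cl[OF assms] by simp
qed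

lemma kappa_clopen_upset_iff:
  "kappa_clopen_upset \<kappa> U \<longleftrightarrow> (\<exists>S. (card_of S, \<kappa>) \<in> ordLess \<and> U = \<Union>(\<s> ` S))"
proof
  assume "kappa_clopen_upset \<kappa> U"
  then obtain F where F: "(card_of F, \<kappa>) \<in> ordLess" "\<forall>V\<in>F. clopen_upset V" "U = \<Union>F"
    unfolding kappa_clopen_upset_def by blast
  then obtain g where g: "\<forall>V\<in>F. V = \<s> (g V)"
    unfolding clopen_upset_iff by metis
  have "(card_of (g ` F), \<kappa>) \<in> ordLess"
    using card_of_image[of g F] F(1) by (rule ordLeq_ordLess_trans)
  moreover have "U = \<Union>(\<s> ` g ` F)"
    using F(3) g by auto
  ultimately show "\<exists>S. (card_of S, \<kappa>) \<in> ordLess \<and> U = \<Union>(\<s> ` S)"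
    by blast
next
  assume "\<exists>S. (card_of S, \<kappa>) \<in> ordLess \<and> U = \<Union>(\<s> ` S)"
  then obtain S where S: "(card_of S, \<kappa>) \<in> ordLess" "U = \<Union>(\<s> ` S)"
    by blast
  have "(card_of (\<s> ` S), \<kappa>) \<in> ordLess"
    using card_of_image[of \<s> S] S(1) by (rule ordLeq_ordLess_trans)
  then show "kappa_clopen_upset \<kappa> U"
    unfolding kappa_clopen_upset_def using S(2) stone_map_clopen_upset by blast
qed

theorem theorem5p17:
  fixes \<kappa> :: "'k rel"
  assumes "Cinfinite \<kappa>" and "regularCard \<kappa>"
  shows "(\<forall>(S::'a::{distrib_lattice,bounded_lattice} set) j.
            (card_of S, \<kappa>) \<in> ordLess \<longrightarrow> is_join S j \<longrightarrow> distributive_join S j)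
     \<longleftrightarrow> (\<forall>U::'a set set. kappa_clopen_upset \<kappa> U
            \<longrightarrow> openin priestley_top (cl2 U) \<longrightarrow> closedin priestley_top (cl2 U)
            \<longrightarrow> cl2 U = cl U)"
proof (intro iffI allI impI)
  fix U :: "'a set set"
  assume distributive: "\<forall>(S::'a set) j. (card_of S, \<kappa>) \<in> ordLess \<longrightarrow> is_join S j \<longrightarrow> distributive_join S j"
    and "kappa_clopen_upset \<kappa> U" and "openin priestley_top (cl2 U)" and "closedin priestley_top (cl2 U)"
  then obtain S where S: "(card_of S, \<kappa>) \<in> ordLess" "U = \<Union>(\<s> ` S)"
    and "clopen_upset (cl2 U)"
    by (auto simp: kappa_clopen_upset_iff clopen_upset_def is_upset_cl2)
  then obtain j where "cl2 U = \<s> j"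
    by (auto simp: clopen_upset_iff)
  then have J: "is_join S j"
    by (simp add: S(2) cl2_Union_stone_map_eq_iff)
  with distributive S(1) have "distributive_join S j"
    by blast
  with J show "cl2 U = cl U"
    by (simp add: S(2) distributive_join_iff_cl2_eq_cl)
next
  fix S :: "'a set" and j
  assume closures_agree: "\<forall>U::'a set set. kappa_clopen_upset \<kappa> U
      \<longrightarrow> openin priestley_top (cl2 U) \<longrightarrow> closedin priestley_top (cl2 U) \<longrightarrow> cl2 U = cl U"
    and "(card_of S, \<kappa>) \<in> ordLess" and J: "is_join S j"
  then have "kappa_clopen_upset \<kappa> (\<Union>(\<s> ` S))"
    by (auto simp: kappa_clopen_upset_iff)
  moreover have "cl2 (\<Union>(\<s> ` S)) = \<s> j"
    using J by (simp add: cl2_Union_stone_map_eq_iff)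
  ultimately have "cl2 (\<Union>(\<s> ` S)) = cl (\<Union>(\<s> ` S))"
    using closures_agree openin_stone_map closedin_stone_map by metis
  with J show "distributive_join S j"
    by (simp add: distributive_join_iff_cl2_eq_cl)
qed

end
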